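(* Let $p$ be a prime and $f,g\in\mathbb{Z}[x]$ monic with nonzero resultant $r$. Then $$v_p(r)\ \ge\ \int_0^\infty\sum_{m=1}^{p^{\lceil t\rceil}}\chi_t^{(f)}(m)\,\chi_t^{(g)}(m)\,dt.$$
   Context: $v_p$ is the $p$-adic valuation, extended to an algebraic closure $\overline{\mathbb{Q}_p}$. For a monic $h\in\overline{\mathbb{Q}_p}[x]$ with factorization $h=\prod_i(x-\delta_i)$ (roots with multiplicity), $m\in\mathbb{Z}_p$ and real $t\ge0$, define $\chi_t^{(h)}(m)=\#\{i: v_p(m-\delta_i)\ge t\}$. The resultant of monic $f=\prod_i(x-\alpha_i)$, $g=\prod_j(x-\beta_j)$ is $r=\prod_{i,j}(\alpha_i-\beta_j)$. *)

theory Defs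
  imports "HOL-Analysis.Analysis" "HOL-Library.Multiset"
    "HOL-Computational_Algebra.Computational_Algebra"
    "Subresultants.Resultant_Prelim"
begin

text \<open>An extension of the p-adic valuation v_p (on the integers) to a field K,
  with values in the extended reals (v 0 = infinity).  The algebraic closure of
  Q_p with its valuation is an instance.\<close>
definition padic_val_ext :: "nat \<Rightarrow> ('a :: field \<Rightarrow> ereal) \<Rightarrow> bool" where
  "padic_val_ext p v \<longleftrightarrow>
     (\<forall>x. v x = \<infinity> \<longleftrightarrow> x = 0) \<and>
     (\<forall>x. v x \<noteq> -\<infinity>) \<and>
     (\<forall>x y. v (x * y) = v x + v y) \<and>
     (\<forall>x y. v (x + y) \<ge> min (v x) (v y)) \<and>
     (\<forall>n::int. n \<noteq> 0 \<longrightarrow> v (of_int n) = ereal (real (multiplicity (int p) n)))"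

text \<open>chi_t^(h)(m) = number of roots delta (with multiplicity, given as the multiset R
  of roots of h) with v(m - delta) \<ge> t.\<close>
definition chi :: "('a :: field \<Rightarrow> ereal) \<Rightarrow> 'a multiset \<Rightarrow> real \<Rightarrow> int \<Rightarrow> nat" where
  "chi v R t m = size (filter_mset (\<lambda>\<delta>. v (of_int m - \<delta>) \<ge> ereal t) R)"

end

theory Submission
  imports Defs "Subresultants.Subresultant"
begin

text \<open>Over the algebraic closure \<open>r = \<Prod> (\<alpha>\<^sub>i - \<beta>\<^sub>j)\<close>, so \<open>v\<^sub>p(r) = \<Sum> v(\<alpha>\<^sub>i - \<beta>\<^sub>j)\<close> over all pairs,
  and every term is nonnegative because roots of monic integer polynomials are integral. For a
  fixed pair and \<open>t \<ge> 0\<close>, at most one \<open>m \<in> [1, p\<^bsup>\<lceil>t\<rceil>\<^esup>]\<close> has \<open>v(m - \<alpha>\<^sub>i) \<ge> t\<close> and \<open>v(m - \<beta>\<^sub>j) \<ge> t\<close>,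
  since two such \<open>m\<close> are congruent modulo \<open>p\<^bsup>\<lceil>t\<rceil>\<^esup>\<close>; and such an \<open>m\<close> exists only if
  \<open>v(\<alpha>\<^sub>i - \<beta>\<^sub>j) \<ge> t\<close>, by the ultrametric inequality. Hence the integrand at \<open>t\<close> is at most the
  number of pairs with \<open>v(\<alpha>\<^sub>i - \<beta>\<^sub>j) \<ge> t\<close>, whose integral over \<open>t \<ge> 0\<close> is \<open>\<Sum> v(\<alpha>\<^sub>i - \<beta>\<^sub>j)\<close>.\<close>

definition linear_factors :: "'a :: comm_ring_1 multiset \<Rightarrow> 'a poly" where
  "linear_factors A = (\<Prod>a\<in>#A. [:-a, 1:])"

lemma linear_factors_empty [simp]: "linear_factors {#} = 1"
  by (simp add: linear_factors_def)

lemma linear_factors_add_mset [simp]: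
  "linear_factors (add_mset a A) = [:-a, 1:] * linear_factors A"
  by (simp add: linear_factors_def)

lemma poly_linear_factors: "poly (linear_factors A) x = (\<Prod>a\<in>#A. x - a)"
  by (simp add: linear_factors_def poly_prod_mset)

lemma lead_coeff_linear_factors [simp]:
  "lead_coeff (linear_factors (A :: 'a :: idom multiset)) = 1"
proof (induction A)
  case (add a A)
  then show ?case by (simp only: linear_factors_add_mset lead_coeff_mult) simp
qed simp

lemma linear_factors_neq_0 [simp]: "linear_factors (A :: 'a :: idom multiset) \<noteq> 0"
  by (metis lead_coeff_linear_factors leading_coeff_0_iff one_neq_zero)

lemma degree_linear_factors [simp]:
  "degree (linear_factors (A :: 'a :: idom multiset)) = size A"
proof (induction A)
  case (add a A)
  then show ?case by (subst linear_factors_add_mset, subst degree_mult_eq) auto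
qed simp

lemma resultant_mod_right:
  fixes G F :: "'a :: field poly"
  assumes monic: "lead_coeff G = 1"
  shows "resultant G F = resultant G (F mod G)"
proof (cases "degree F < degree G")
  case True
  then show ?thesis by (simp add: mod_poly_less)
next
  case False
  then have deg_FG: "degree G \<le> degree F" by simp
  show ?thesis
  proof (cases "degree G = 0")
    case True
    with monic have "G = 1" by (metis degree_0_id one_pCons)
    then show ?thesis by simp
  next
    case False
    define H where "H = F mod G"
    have FGH: "F + (- (F div G)) * G = H"
      unfolding H_def by (simp add: mod_div_mult_eq[symmetric] algebra_simps)
    have "degree H < degree G"
      using False degree_mod_less[of G F] by (cases "G = 0") (auto simp: H_def)
    have "resultant F G = (-1) ^ (degree F * degree G) * resultant G H"
    proof (cases "degree H = 0")
      case False
      from BT_lemma_1_12[OF FGH deg_FG, of 0] False \<open>degree H < degree G\<close>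
      have "subresultant 0 F G = Polynomial.smult ((-1) ^ (degree F * degree G) * lead_coeff G ^ (degree F - degree H))
          (subresultant 0 G H)"
        by simp
      from arg_cong[OF this, of "\<lambda>x. coeff x 0"] show ?thesis
        by (simp add: subresultant_resultant monic)
    next
      case True
      from BT_lemma_1_13'[OF FGH deg_FG, of 0] True \<open>degree H < degree G\<close>
      have "subresultant 0 F G = Polynomial.smult ((-1) ^ (degree F * degree G) * lead_coeff G ^ degree F
          * lead_coeff H ^ (degree G - 1)) H"
        by simp
      from arg_cong[OF this, of "\<lambda>x. coeff x 0"] True \<open>degree G \<noteq> 0\<close> show ?thesis
        by (auto simp: subresultant_resultant monic elim!: degree_eq_zeroE
            simp flip: power_Suc2)
    qed
    then show ?thesis
      using resultant_swap[of G F] unfolding H_def by (simp add: mult.commute flip: power_add)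
  qed
qed

lemma prod_linear_factors_swap:
  fixes A B :: "'a :: comm_ring_1 multiset"
  shows "(-1) ^ (size A * size B) * (\<Prod>a\<in>#A. poly (linear_factors B) a)
    = (\<Prod>b\<in>#B. poly (linear_factors A) b)"
proof -
  have flip: "(\<Prod>b\<in>#B. b - a) = (-1) ^ size B * (\<Prod>b\<in>#B. a - b)" for a :: 'a
  proof -
    have "(\<Prod>b\<in>#B. b - a) = (\<Prod>b\<in>#B. - 1 * (a - b))" by simp
    then show ?thesis by (simp only: prod_mset.distrib prod_mset_constant)
  qed
  have "(\<Prod>b\<in>#B. \<Prod>a\<in>#A. b - a) = (\<Prod>a\<in>#A. \<Prod>b\<in>#B. b - a)"
    by (simp only: prod_mset.swap[of _ B])
  also have "\<dots> = (\<Prod>a\<in>#A. (-1) ^ size B * (\<Prod>b\<in>#B. a - b))"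
    by (simp only: flip)
  also have "\<dots> = (-1) ^ (size A * size B) * (\<Prod>a\<in>#A. \<Prod>b\<in>#B. a - b)"
    by (simp only: prod_mset.distrib prod_mset_constant power_mult[symmetric] mult.commute[of "size B"])
  finally show ?thesis by (simp only: poly_linear_factors)
qed

text \<open>Induction on \<open>size B + degree F\<close>: reduce \<open>F\<close> modulo the monic \<open>linear_factors B\<close>, which does not
  change its values at the \<open>b \<in># B\<close>; once \<open>degree F < size B\<close>, split \<open>F\<close> over the algebraically closed
  field and swap the arguments.\<close>

lemma resultant_linear_factors:
  fixes F :: "'a :: alg_closed_field poly"
  shows "resultant (linear_factors B) F = (\<Prod>b\<in>#B. poly F b)"
proof (induction "size B + degree F" arbitrary: B F rule: less_induct)
  case less
  have reduce: "resultant (linear_factors B') H = (\<Prod>b\<in>#B'. poly H b)"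
    if "size B' + degree (H mod linear_factors B') < size B + degree F" for B' :: "'a multiset" and H
  proof -
    have "resultant (linear_factors B') H = resultant (linear_factors B') (H mod linear_factors B')"
      by (rule resultant_mod_right[OF lead_coeff_linear_factors])
    also have "\<dots> = (\<Prod>b\<in>#B'. poly (H mod linear_factors B') b)"
      using less.hyps[OF that] .
    also have "\<dots> = (\<Prod>b\<in>#B'. poly H b)"
      by (intro arg_cong[where f = prod_mset] image_mset_cong poly_mod)
        (auto simp: poly_linear_factors)
    finally show ?thesis .
  qed
  have deg_mod: "degree (H mod linear_factors B') < size B'
      \<or> degree (H mod linear_factors B') = 0" for B' :: "'a multiset" and H
    using degree_mod_less[of "linear_factors B'" H] by auto
  consider "F = 0" | "B = {#}" | "F \<noteq> 0" "B \<noteq> {#}" "size B \<le> degree F"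
    | "F \<noteq> 0" "degree F < size B"
    by linarith
  then show ?case
  proof cases
    case 1
    have "resultant (linear_factors B) 0 = 0 ^ size B"
      using resultant_const(2)[of "linear_factors B" 0] by simp
    moreover have "(\<Prod>b\<in>#B. poly 0 b) = (0 :: 'a) ^ size B"
      by (induction B) simp_all
    ultimately show ?thesis unfolding 1 by (simp only:)
  next
    case 2
    then show ?thesis by simp
  next
    case 3
    then have "size B > 0" by (simp add: nonempty_has_size)
    with 3 deg_mod[where B' = B and H = F] show ?thesis by (intro reduce) auto
  next
    case 4
    define c where "c = lead_coeff F"
    obtain A where deg_F: "degree F = size A" and F: "F = Polynomial.smult c (linear_factors A)"
      using alg_closed_imp_factorization[OF \<open>F \<noteq> 0\<close>] unfolding c_def linear_factors_def
      by metis
    have "c \<noteq> 0" using \<open>F \<noteq> 0\<close> by (simp add: c_def)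
    have "resultant (linear_factors A) (linear_factors B) = (\<Prod>a\<in>#A. poly (linear_factors B) a)"
      using 4 deg_F deg_mod[where B' = A and H = "linear_factors B"] by (intro reduce) auto
    then have "resultant (linear_factors B) F
        = (-1) ^ (size A * size B) * (c ^ size B * (\<Prod>a\<in>#A. poly (linear_factors B) a))"
      using resultant_swap[of "linear_factors B" F] \<open>c \<noteq> 0\<close>
      by (simp add: F resultant_smult_left mult.commute[of "size B"])
    also have "\<dots> = c ^ size B * ((-1) ^ (size A * size B) * (\<Prod>a\<in>#A. poly (linear_factors B) a))"
      by (rule mult.left_commute)
    also have "\<dots> = c ^ size B * (\<Prod>b\<in>#B. poly (linear_factors A) b)"
      by (simp only: prod_linear_factors_swap)
    also have "\<dots> = (\<Prod>b\<in>#B. poly F b)"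
      by (simp add: F prod_mset.distrib)
    finally show ?thesis .
  qed
qed

lemma of_int_resultant_linear_factors:
  fixes f g :: "int poly" and A B :: "'a :: alg_closed_field multiset"
  assumes "monic f" and "monic g"
    and "map_poly of_int f = linear_factors A" and "map_poly of_int g = linear_factors B"
  shows "of_int (resultant f g) = (\<Prod>\<alpha>\<in>#A. \<Prod>\<beta>\<in>#B. \<alpha> - \<beta>)"
proof -
  have "of_int (resultant f g) = resultant (map_poly of_int f) (map_poly (of_int :: int \<Rightarrow> 'a) g)"
    using assms(1,2) by (simp add: of_int_hom.resultant_map_poly map_poly_degree_eq)
  also have "\<dots> = (\<Prod>\<alpha>\<in>#A. poly (linear_factors B) \<alpha>)"
    unfolding assms(3,4) by (rule resultant_linear_factors)
  finally show ?thesis by (simp add: poly_linear_factors)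
qed

lemma e2ennreal_add: "0 \<le> x \<Longrightarrow> 0 \<le> y \<Longrightarrow> e2ennreal (x + y) = e2ennreal x + e2ennreal y"
  by (simp add: plus_ennreal.abs_eq eq_onp_def)

lemma sum_mset_nonneg:
  fixes f :: "'a \<Rightarrow> 'b :: ordered_comm_monoid_add"
  shows "(\<And>x. x \<in># A \<Longrightarrow> 0 \<le> f x) \<Longrightarrow> 0 \<le> (\<Sum>x\<in>#A. f x)"
  by (induction A) auto

lemma e2ennreal_sum_mset:
  "(\<And>x. x \<in># A \<Longrightarrow> 0 \<le> f x) \<Longrightarrow> e2ennreal (\<Sum>x\<in>#A. f x) = (\<Sum>x\<in>#A. e2ennreal (f x))"
  by (induction A) (simp_all add: e2ennreal_add e2ennreal_neg sum_mset_nonneg)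

lemma borel_measurable_sum_mset:
  "(\<And>a. a \<in># A \<Longrightarrow> f a \<in> borel_measurable M) \<Longrightarrow> (\<lambda>x. \<Sum>a\<in>#A. f a x :: ennreal) \<in> borel_measurable M"
  by (induction A) simp_all

lemma nn_integral_sum_mset:
  "(\<And>a. a \<in># A \<Longrightarrow> f a \<in> borel_measurable M)
    \<Longrightarrow> (\<integral>\<^sup>+x. (\<Sum>a\<in>#A. f a x) \<partial>M) = (\<Sum>a\<in>#A. \<integral>\<^sup>+x. f a x \<partial>M)"
  by (induction A) (simp_all add: nn_integral_add borel_measurable_sum_mset)

lemma emeasure_nonneg_below_ereal_le: "emeasure lborel {t. 0 \<le> t \<and> ereal t \<le> e} \<le> e2ennreal e"
proof (cases e)
  case (real d)
  have "{t. 0 \<le> t \<and> ereal t \<le> ereal d} = {0..d}" by auto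
  then show ?thesis unfolding real by (cases "0 \<le> d") (simp_all only:, simp_all add: ennreal_neg)
qed (simp_all add: e2ennreal_neg)

lemma chi_eq_sum_mset: "chi v R t m = (\<Sum>\<delta>\<in>#R. of_bool (ereal t \<le> v (of_int m - \<delta>)))"
  by (induction R) (simp_all add: chi_def)

lemma sum_chi_product:
  assumes "finite M"
  shows "(\<Sum>m\<in>M. chi v A t m * chi v B t m) = (\<Sum>\<alpha>\<in>#A. \<Sum>\<beta>\<in>#B.
      card {m\<in>M. ereal t \<le> v (of_int m - \<alpha>) \<and> ereal t \<le> v (of_int m - \<beta>)})"
proof -
  let ?close = "\<lambda>\<alpha> \<beta> m. ereal t \<le> v (of_int m - \<alpha>) \<and> ereal t \<le> v (of_int m - \<beta>)"
  have "(\<Sum>m\<in>M. chi v A t m * chi v B t m) = (\<Sum>m\<in>M. \<Sum>\<alpha>\<in>#A. \<Sum>\<beta>\<in>#B. of_bool (?close \<alpha> \<beta> m))"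
    unfolding chi_eq_sum_mset sum_mset_product by (simp add: of_bool_conj)
  also have "\<dots> = (\<Sum>\<alpha>\<in>#A. \<Sum>\<beta>\<in>#B. \<Sum>m\<in>M. of_bool (?close \<alpha> \<beta> m))"
    by (simp only: sum_unfold_sum_mset sum_mset.swap[of _ "mset_set M"])
  also have "\<dots> = (\<Sum>\<alpha>\<in>#A. \<Sum>\<beta>\<in>#B. card {m\<in>M. ?close \<alpha> \<beta> m})"
    using assms by (simp add: sum.inter_filter[symmetric] Int_def)
  finally show ?thesis .
qed

locale padic_valuation =
  fixes p :: nat and v :: "'a :: field \<Rightarrow> ereal"
  assumes padic_val_ext: "padic_val_ext p v"
begin

lemma val_eq_infinity_iff [simp]: "v x = \<infinity> \<longleftrightarrow> x = 0"
  using padic_val_ext by (simp add: padic_val_ext_def)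

lemma val_zero [simp]: "v 0 = \<infinity>"
  by simp

lemma val_neq_minus_infinity [simp]: "v x \<noteq> -\<infinity>"
  using padic_val_ext by (simp add: padic_val_ext_def)

lemma val_mult: "v (x * y) = v x + v y"
  using padic_val_ext by (simp add: padic_val_ext_def)

lemma val_add_ge: "min (v x) (v y) \<le> v (x + y)"
  using padic_val_ext by (simp add: padic_val_ext_def)

lemma val_of_int: "n \<noteq> 0 \<Longrightarrow> v (of_int n) = real (multiplicity (int p) n)"
  using padic_val_ext by (simp add: padic_val_ext_def)

lemma val_one [simp]: "v 1 = 0"
  using val_of_int[of 1] by (simp add: zero_ereal_def)

lemma val_uminus [simp]: "v (- x) = v x"
  using val_mult[of "-1" x] val_of_int[of "-1"] by (simp add: zero_ereal_def)

lemma val_diff_ge: "c \<le> v x \<Longrightarrow> c \<le> v y \<Longrightarrow> c \<le> v (x - y)"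
  using val_add_ge[of x "- y"] by (simp add: min_def split: if_splits)

lemma val_of_int_nonneg: "0 \<le> v (of_int n)"
  by (cases "n = 0") (simp_all add: val_of_int)

lemma val_power: "v x = ereal w \<Longrightarrow> v (x ^ k) = ereal (real k * w)"
  by (induction k) (simp_all add: val_mult algebra_simps)

lemma val_sum_ge: "finite S \<Longrightarrow> (\<And>k. k \<in> S \<Longrightarrow> c \<le> v (f k)) \<Longrightarrow> c \<le> v (sum f S)"
proof (induction S rule: finite_induct)
  case (insert k S)
  then have "c \<le> min (v (f k)) (v (sum f S))" by simp
  also have "\<dots> \<le> v (f k + sum f S)" by (rule val_add_ge)
  finally show ?case using insert by simp
qed simp

lemma val_prod_mset: "v (\<Prod>x\<in>#A. f x) = (\<Sum>x\<in>#A. v (f x))"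
  by (induction A) (simp_all add: val_mult)

lemma val_root_nonneg:
  fixes f :: "int poly"
  assumes "monic f" and root: "poly (map_poly of_int f) \<alpha> = 0"
  shows "0 \<le> v \<alpha>"
proof (rule ccontr)
  assume "\<not> 0 \<le> v \<alpha>"
  then obtain w where w: "v \<alpha> = ereal w" and "w < 0"
    by (cases "v \<alpha>") auto
  define n where "n = degree f"
  have "n \<noteq> 0"
  proof
    assume "n = 0"
    with \<open>monic f\<close> have "f = 1" by (simp add: n_def monic_degree_0)
    with root show False by simp
  qed
  have "poly (map_poly of_int f) \<alpha> = (\<Sum>k<n. of_int (coeff f k) * \<alpha> ^ k) + \<alpha> ^ n"
    using \<open>monic f\<close>
    by (simp add: poly_altdef map_poly_degree_eq coeff_map_poly n_def lessThan_Suc_atMost[symmetric])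
  with root have "v (\<Sum>k<n. of_int (coeff f k) * \<alpha> ^ k) = v (\<alpha> ^ n)"
    by (metis add_eq_0_iff val_uminus)
  also have "\<dots> = ereal (real n * w)" by (rule val_power[OF w])
  finally have "ereal (real (n - 1) * w) \<le> ereal (real n * w)"
  proof (rule subst, intro val_sum_ge)
    fix k assume "k \<in> {..<n}"
    with \<open>w < 0\<close> have "ereal (real (n - 1) * w) \<le> ereal (real k * w)"
      by (simp add: mult_right_mono_neg)
    also have "\<dots> \<le> v (of_int (coeff f k)) + ereal (real k * w)"
      using val_of_int_nonneg by (simp add: add_increasing)
    also have "\<dots> = v (of_int (coeff f k) * \<alpha> ^ k)"
      by (simp add: val_mult val_power[OF w])
    finally show "ereal (real (n - 1) * w) \<le> v (of_int (coeff f k) * \<alpha> ^ k)" .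
  qed simp
  with \<open>n \<noteq> 0\<close> \<open>w < 0\<close> show False by (simp add: of_nat_diff algebra_simps)
qed

lemma close_integers_eq:
  assumes "ereal t \<le> v (of_int m - a)" and "ereal t \<le> v (of_int m' - a)"
    and "\<bar>m - m'\<bar> < int p ^ nat \<lceil>t\<rceil>"
  shows "m = m'"
proof (rule ccontr)
  assume "m \<noteq> m'"
  have "ereal t \<le> v ((of_int m - a) - (of_int m' - a))"
    using assms(1,2) by (rule val_diff_ge)
  also have "(of_int m - a) - (of_int m' - a) = of_int (m - m')"
    by simp
  also have "v (of_int (m - m')) = real (multiplicity (int p) (m - m'))"
    using \<open>m \<noteq> m'\<close> by (intro val_of_int) simp
  finally have "t \<le> real (multiplicity (int p) (m - m'))"
    by simp
  then have "nat \<lceil>t\<rceil> \<le> multiplicity (int p) (m - m')"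
    by (simp add: nat_le_iff ceiling_le_iff)
  then have "int p ^ nat \<lceil>t\<rceil> dvd m - m'" by (rule multiplicity_dvd')
  with \<open>m \<noteq> m'\<close> have "\<bar>int p ^ nat \<lceil>t\<rceil>\<bar> \<le> \<bar>m - m'\<bar>" by (intro dvd_imp_le_int) simp_all
  with assms(3) show False by simp
qed

lemma card_common_close_integers_le:
  "card {m \<in> {1..int p ^ nat \<lceil>t\<rceil>}. ereal t \<le> v (of_int m - a) \<and> ereal t \<le> v (of_int m - b)}
    \<le> of_bool (ereal t \<le> v (a - b))"
  (is "card ?M \<le> _")
proof (cases "?M = {}")
  case True
  then show ?thesis by (simp only: card.empty)
next
  case False
  then obtain m where m: "m \<in> ?M" by blast
  with val_diff_ge[of t "of_int m - b" "of_int m - a"] have "ereal t \<le> v (a - b)" by simp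
  moreover have "finite ?M"
    by (rule finite_subset[of _ "{1..int p ^ nat \<lceil>t\<rceil>}"]) auto
  then have "card ?M \<le> Suc 0"
    by (subst card_le_Suc0_iff_eq) (auto intro: close_integers_eq)
  ultimately show ?thesis by simp
qed

lemma sum_chi_product_le:
  "(\<Sum>m = 1..int p ^ nat \<lceil>t\<rceil>. chi v A t m * chi v B t m)
    \<le> (\<Sum>\<alpha>\<in>#A. \<Sum>\<beta>\<in>#B. of_bool (ereal t \<le> v (\<alpha> - \<beta>)))"
  unfolding sum_chi_product[OF finite_atLeastAtMost_int]
  by (intro sum_mset_mono card_common_close_integers_le)

lemma nn_integral_chi_product_le:
  "(\<integral>\<^sup>+ t\<in>{0..}. ennreal (real (\<Sum>m = 1..int p ^ nat \<lceil>t\<rceil>. chi v A t m * chi v B t m)) \<partial>lborel)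
    \<le> (\<Sum>\<alpha>\<in>#A. \<Sum>\<beta>\<in>#B. e2ennreal (v (\<alpha> - \<beta>)))"
proof -
  let ?S = "\<lambda>\<alpha> \<beta>. {t. 0 \<le> t \<and> ereal t \<le> v (\<alpha> - \<beta>)}"
  have "(\<integral>\<^sup>+ t\<in>{0..}. ennreal (real (\<Sum>m = 1..int p ^ nat \<lceil>t\<rceil>. chi v A t m * chi v B t m)) \<partial>lborel)
      \<le> (\<integral>\<^sup>+ t. (\<Sum>\<alpha>\<in>#A. \<Sum>\<beta>\<in>#B. indicator (?S \<alpha> \<beta>) t) \<partial>lborel)"
  proof (intro nn_integral_mono)
    fix t :: real
    show "ennreal (real (\<Sum>m = 1..int p ^ nat \<lceil>t\<rceil>. chi v A t m * chi v B t m)) * indicator {0..} t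
        \<le> (\<Sum>\<alpha>\<in>#A. \<Sum>\<beta>\<in>#B. indicator (?S \<alpha> \<beta>) t)"
    proof (cases "0 \<le> t")
      case True
      have "ennreal (real (\<Sum>m = 1..int p ^ nat \<lceil>t\<rceil>. chi v A t m * chi v B t m))
          \<le> of_nat (\<Sum>\<alpha>\<in>#A. \<Sum>\<beta>\<in>#B. of_bool (ereal t \<le> v (\<alpha> - \<beta>)))"
        unfolding ennreal_of_nat_eq_real_of_nat by (intro ennreal_leI of_nat_mono sum_chi_product_le)
      also have "\<dots> = (\<Sum>\<alpha>\<in>#A. \<Sum>\<beta>\<in>#B. indicator (?S \<alpha> \<beta>) t)"
        using True by (simp add: of_nat_sum_mset multiset.map_comp comp_def indicator_def)
      finally show ?thesis using True by simp
    qed simp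
  qed
  also have "\<dots> = (\<Sum>\<alpha>\<in>#A. \<Sum>\<beta>\<in>#B. emeasure lborel (?S \<alpha> \<beta>))"
    by (simp add: nn_integral_sum_mset borel_measurable_sum_mset)
  also have "\<dots> \<le> (\<Sum>\<alpha>\<in>#A. \<Sum>\<beta>\<in>#B. e2ennreal (v (\<alpha> - \<beta>)))"
    by (intro sum_mset_mono emeasure_nonneg_below_ereal_le)
  finally show ?thesis .
qed

end

theorem mainTheorem12:
  fixes p :: nat and f g :: "int poly" and v :: "'a :: alg_closed_field \<Rightarrow> ereal"
    and Rf Rg :: "'a multiset"
  assumes "prime p"
    and "monic f" and "monic g"
    and "resultant f g \<noteq> 0"
    and "padic_val_ext p v"
    and "map_poly of_int f = (\<Prod>\<alpha>\<in>#Rf. [:-\<alpha>, 1:])"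
    and "map_poly of_int g = (\<Prod>\<beta>\<in>#Rg. [:-\<beta>, 1:])"
  shows "ennreal (real (multiplicity (int p) (resultant f g)))
     \<ge> (\<integral>\<^sup>+ t\<in>{0..}. ennreal (real (\<Sum>m = 1..int p ^ nat \<lceil>t\<rceil>.
            chi v Rf t m * chi v Rg t m)) \<partial>lborel)"
proof -
  interpret padic_valuation p v by unfold_locales (fact assms(5))
  note roots = assms(6,7)[folded linear_factors_def]
  have integral: "0 \<le> v \<alpha>" if "map_poly of_int h = linear_factors R" "monic h" "\<alpha> \<in># R" for h R \<alpha>
    using val_root_nonneg[OF \<open>monic h\<close>] that by (simp add: poly_linear_factors)
  have diff_val: "0 \<le> v (\<alpha> - \<beta>)" if "\<alpha> \<in># Rf" "\<beta> \<in># Rg" for \<alpha> \<beta>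
    using integral[OF roots(1) assms(2) that(1)] integral[OF roots(2) assms(3) that(2)] by (rule val_diff_ge)
  have "ennreal (real (multiplicity (int p) (resultant f g))) = e2ennreal (v (of_int (resultant f g)))"
    using assms(4) by (simp add: val_of_int)
  also have "\<dots> = e2ennreal (\<Sum>\<alpha>\<in>#Rf. \<Sum>\<beta>\<in>#Rg. v (\<alpha> - \<beta>))"
    by (simp add: of_int_resultant_linear_factors[OF assms(2,3) roots] val_prod_mset)
  also have "\<dots> = (\<Sum>\<alpha>\<in>#Rf. e2ennreal (\<Sum>\<beta>\<in>#Rg. v (\<alpha> - \<beta>)))"
    by (intro e2ennreal_sum_mset sum_mset_nonneg diff_val)
  also have "\<dots> = (\<Sum>\<alpha>\<in>#Rf. \<Sum>\<beta>\<in>#Rg. e2ennreal (v (\<alpha> - \<beta>)))"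
    by (intro arg_cong[where f = sum_mset] image_mset_cong e2ennreal_sum_mset diff_val)
  finally show ?thesis using nn_integral_chi_product_le by simp
qed

end
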